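(* Let $G$ be a graph and $S\subseteq V(G)$. For any nonempty set $C \subseteq V(G)$ such that $G[C]$ is connected, the following conditions are equivalent: (i) $N(C)$ is an important $C-S$ separator; (ii) for every $v \in C$, $N(C)$ is an important $\{v\}-S$ separator; (iii) there exists $v \in C$ such that $N(C)$ is an important $\{v\}-S$ separator.
   Context: $N(C)$ is the set of vertices outside $C$ with a neighbour in $C$. For $X,Y\subseteq V(G)$, a set $W\subseteq V(G)$ is an $X-Y$ separator if no connected component of $G\setminus W$ contains both a vertex of $X$ and a vertex of $Y$. For a graph $H$ and $Z\subseteq V(H)$, $R_H(Z)$ is the set of vertices reachable from $Z$ in $H$. An inclusion-wise minimal $X-Y$ separator $W$ is an important $X-Y$ separator if there is no $X-Y$ separator $W'$ with $|W'|\le|W|$ and $R_{G\setminus W}(X\setminus W)\subsetneq R_{G\setminus W'}(X\setminus W')$. *)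

theory Defs
  imports Main
begin

definition graph :: "'a set \<Rightarrow> ('a \<Rightarrow> 'a \<Rightarrow> bool) \<Rightarrow> bool" where
  "graph V E \<longleftrightarrow> finite V \<and> (\<forall>u v. E u v \<longrightarrow> u \<in> V \<and> v \<in> V)
     \<and> (\<forall>u v. E u v \<longrightarrow> E v u) \<and> (\<forall>v. \<not> E v v)"

definition induced_adj :: "('a \<Rightarrow> 'a \<Rightarrow> bool) \<Rightarrow> 'a set \<Rightarrow> 'a \<Rightarrow> 'a \<Rightarrow> bool" where
  "induced_adj E U u v \<longleftrightarrow> u \<in> U \<and> v \<in> U \<and> E u v"

definition reach :: "('a \<Rightarrow> 'a \<Rightarrow> bool) \<Rightarrow> 'a set \<Rightarrow> 'a set \<Rightarrow> 'a set" where
  "reach E U Z = {v \<in> U. \<exists>z \<in> Z \<inter> U. (induced_adj E U)\<^sup>*\<^sup>* z v}"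

definition connected_induced :: "'a set \<Rightarrow> ('a \<Rightarrow> 'a \<Rightarrow> bool) \<Rightarrow> 'a set \<Rightarrow> bool" where
  "connected_induced V E C \<longleftrightarrow> C \<subseteq> V \<and> (\<forall>u \<in> C. \<forall>v \<in> C. (induced_adj E C)\<^sup>*\<^sup>* u v)"

definition nbhd :: "'a set \<Rightarrow> ('a \<Rightarrow> 'a \<Rightarrow> bool) \<Rightarrow> 'a set \<Rightarrow> 'a set" where
  "nbhd V E C = {v \<in> V - C. \<exists>u \<in> C. E u v}"

definition separator :: "'a set \<Rightarrow> ('a \<Rightarrow> 'a \<Rightarrow> bool) \<Rightarrow> 'a set \<Rightarrow> 'a set \<Rightarrow> 'a set \<Rightarrow> bool" where
  "separator V E X Y W \<longleftrightarrow> W \<subseteq> V \<and>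
     (\<forall>x \<in> X - W. \<forall>y \<in> Y - W. \<not> (induced_adj E (V - W))\<^sup>*\<^sup>* x y)"

definition important_separator :: "'a set \<Rightarrow> ('a \<Rightarrow> 'a \<Rightarrow> bool) \<Rightarrow> 'a set \<Rightarrow> 'a set \<Rightarrow> 'a set \<Rightarrow> bool" where
  "important_separator V E X Y W \<longleftrightarrow>
     separator V E X Y W \<and> (\<forall>W'. W' \<subset> W \<longrightarrow> \<not> separator V E X Y W') \<and>
     \<not> (\<exists>W'. separator V E X Y W' \<and> card W' \<le> card W \<and>
            reach E (V - W) (X - W) \<subset> reach E (V - W') (X - W'))"

end

theory Submission
  imports Defs
begin

text \<open>A connected set C avoiding a separator W lies in a single component of G - W, so
  as a source set it behaves exactly like any one of its vertices: it is separated from S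
  by the same sets W and reaches the same vertices. Moreover every set W' competing with
  W in the importance condition must avoid C, because C already lies in the region
  reachable from C in G - W. Taking W = N(C) gives the equivalence of all three
  conditions.\<close>

lemma rtranclp_induced_adj_mono:
  assumes "U \<subseteq> U'" "(induced_adj E U)\<^sup>*\<^sup>* u w"
  shows "(induced_adj E U')\<^sup>*\<^sup>* u w"
proof -
  have "induced_adj E U a b \<longrightarrow> induced_adj E U' a b" for a b
    using assms(1) unfolding induced_adj_def by blast
  then show ?thesis using assms(2) mono_rtranclp by metis
qed

lemma connected_induced_rtranclp_diff:
  assumes "connected_induced V E C" "C \<inter> W = {}" "u \<in> C" "w \<in> C"
  shows "(induced_adj E (V - W))\<^sup>*\<^sup>* u w"
proof (rule rtranclp_induced_adj_mono)
  show "C \<subseteq> V - W" using assms(1,2) unfolding connected_induced_def by blast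
  show "(induced_adj E C)\<^sup>*\<^sup>* u w" using assms(1,3,4) unfolding connected_induced_def by blast
qed

lemma connected_induced_rtranclp_diff_iff:
  assumes "connected_induced V E C" "C \<inter> W = {}" "v \<in> C" "c \<in> C"
  shows "(induced_adj E (V - W))\<^sup>*\<^sup>* c x \<longleftrightarrow> (induced_adj E (V - W))\<^sup>*\<^sup>* v x"
  using connected_induced_rtranclp_diff[OF assms(1,2,3,4)]
    connected_induced_rtranclp_diff[OF assms(1,2,4,3)]
  by (meson rtranclp_trans)

lemma separator_connected_iff_singleton:
  assumes "connected_induced V E C" "C \<inter> W = {}" "v \<in> C"
  shows "separator V E C S W \<longleftrightarrow> separator V E {v} S W"
proof -
  have "C - W = C" "{v} - W = {v}" using assms(2,3) by blast+
  then show ?thesis unfolding separator_def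
    using connected_induced_rtranclp_diff_iff[OF assms] assms(3) by (simp only:) blast
qed

lemma reach_connected_eq_singleton:
  assumes "connected_induced V E C" "C \<inter> W = {}" "v \<in> C"
  shows "reach E (V - W) (C - W) = reach E (V - W) ({v} - W)"
proof -
  have "(C - W) \<inter> (V - W) = C" "({v} - W) \<inter> (V - W) = {v}"
    using assms unfolding connected_induced_def by blast+
  then show ?thesis unfolding reach_def
    using connected_induced_rtranclp_diff_iff[OF assms] assms(3) by (simp only:) blast
qed

lemma reach_subset: "reach E U Z \<subseteq> U"
  unfolding reach_def by blast

lemma subset_reach_diff:
  assumes "C \<subseteq> V" "C \<inter> W = {}"
  shows "C \<subseteq> reach E (V - W) (C - W)"
  using assms unfolding reach_def by blast

lemma important_separator_connected_iff_singleton: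
  assumes "connected_induced V E C" "C \<inter> W = {}" "v \<in> C"
  shows "important_separator V E C S W \<longleftrightarrow> important_separator V E {v} S W"
proof -
  have CV: "C \<subseteq> V" using assms(1) unfolding connected_induced_def by blast
  have reach_W: "reach E (V - W) (C - W) = reach E (V - W) ({v} - W)"
    using reach_connected_eq_singleton[OF assms] .
  have improvement_iff:
    "(separator V E C S W' \<and> card W' \<le> card W \<and>
        reach E (V - W) (C - W) \<subset> reach E (V - W') (C - W'))
     \<longleftrightarrow> (separator V E {v} S W' \<and> card W' \<le> card W \<and>
        reach E (V - W) ({v} - W) \<subset> reach E (V - W') ({v} - W'))" for W'
  proof (cases "C \<inter> W' = {}")
    case True
    then show ?thesis
      using separator_connected_iff_singleton[OF assms(1) True assms(3)]
        reach_connected_eq_singleton[OF assms(1) True assms(3)] reach_W by simp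
  next
    case False
    \<comment> \<open>an improving W' would have to enlarge a region that already contains C\<close>
    have "\<not> reach E (V - W) (C - W) \<subset> reach E (V - W') X" for X
      using False subset_reach_diff[OF CV assms(2), of E] reach_subset[of E "V - W'" X] by blast
    then show ?thesis using reach_W by metis
  qed
  have separator_iff: "separator V E C S W' \<longleftrightarrow> separator V E {v} S W'" if "W' \<subseteq> W" for W'
    using separator_connected_iff_singleton[OF assms(1) _ assms(3)] that assms(2) by blast
  have "(\<forall>W'. W' \<subset> W \<longrightarrow> \<not> separator V E C S W')
      \<longleftrightarrow> (\<forall>W'. W' \<subset> W \<longrightarrow> \<not> separator V E {v} S W')"
    using separator_iff by auto
  then show ?thesis
    unfolding important_separator_def by (simp only: separator_iff improvement_iff)
qed

lemma nbhd_disjoint: "C \<inter> nbhd V E C = {}"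
  unfolding nbhd_def by blast

theorem lemma3p3:
  fixes V :: "'a set" and E :: "'a \<Rightarrow> 'a \<Rightarrow> bool" and S C :: "'a set"
  assumes "graph V E"
    and "S \<subseteq> V"
    and "C \<noteq> {}"
    and "connected_induced V E C"
  shows "(important_separator V E C S (nbhd V E C)
            \<longleftrightarrow> (\<forall>v \<in> C. important_separator V E {v} S (nbhd V E C)))
       \<and> ((\<forall>v \<in> C. important_separator V E {v} S (nbhd V E C))
            \<longleftrightarrow> (\<exists>v \<in> C. important_separator V E {v} S (nbhd V E C)))"
proof -
  have "important_separator V E {v} S (nbhd V E C) \<longleftrightarrow> important_separator V E C S (nbhd V E C)"
    if "v \<in> C" for v
    using important_separator_connected_iff_singleton[OF assms(4) nbhd_disjoint that] by (rule sym)
  then show ?thesis using assms(3) by auto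
qed

end
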